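(* Let $\theta$ be a primitive aperiodic quasi-bijective substitution in simplified form, with notation as in the context. Then $S^{(2)}_\theta$ is invariant under diagonal right multiplication by elements of $\mathcal H_{-+}\cup\mathcal H_+$, i.e. $(L,R)\in S^{(2)}_\theta$ and $\psi\in\mathcal H_{-+}\cup\mathcal H_+$ imply $(L\psi,R\psi)\in S^{(2)}_\theta$. Furthermore, for every $\phi\in\mathcal H_{+-}$, the map $(L,R)\mapsto(L\phi,R\phi)$ is a bijection from $S^{(2)}_\theta$ onto the set $S^{(2,-)}_\theta$ of consecutive pairs $(L,R)\in\mathcal H_-\times\mathcal H_{+-}$.
   Context: A substitution $\theta$ of constant length $\ell$ on a finite alphabet $\mathcal A$ is given by maps $\theta_0,\dots,\theta_{\ell-1}:\mathcal A\to\mathcal A$ with $\theta(a)=\theta_0(a)\cdots\theta_{\ell-1}(a)$; the column maps $(\theta^n)_i$, $0\le i<\ell^n$, of $\theta^n$ are obtained by $(\theta\theta')_{i+\ell j}=\theta_i\theta'_j$ (composition of maps). The column rank $c$ is the minimum over $n,i$ of $|(\theta^n)_i(\mathcal A)|$. $\theta$ is quasi-bijective if for some power each column map has rank $c$; it is in simplified form if each $\theta_i$ has rank $c$ and every $\theta$-periodic point is $\theta$-fixed, so that $e_+:=\theta_0$ and $e_-:=\theta_{\ell-1}$ are idempotent maps. $S_\theta$ is the semigroup of maps $\mathcal A\to\mathcal A$ generated by all column maps of all $\theta^n$, $n\ge1$; it is completely simple and $e_\pm$ are minimal idempotents. $\mathcal H_+=e_+S_\theta e_+$ and $\mathcal H_-=e_-S_\theta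 e_-$ are groups; $e_{+-}$ is the unique idempotent in the group $\mathcal H_{+-}$ containing $e_+e_-$ (the intersection of the right ideal class of $e_+$ and left ideal class of $e_-$), and $e_{-+}$, $\mathcal H_{-+}$ are defined symmetrically (containing $e_-e_+$). Two elements $L,R\in S_\theta$ are consecutive if $L=(\theta^n)_{i-1}$, $R=(\theta^n)_i$ for some $n>0$, $0<i<\ell^n$. $S^{(2)}_\theta$ is the set of consecutive pairs $(L,R)\in\mathcal H_{-+}\times\mathcal H_+$. *)

theory Defs
  imports Main
begin

text \<open>A substitution of constant length l on the finite alphabet 'a is given by
  its column maps th 0, ..., th (l-1) :: 'a => 'a.  The column maps of th^n are
  col th l n k for k < l^n, following (th th')_(i + l j) = th_i o th'_j.\<close>

fun col :: "(nat \<Rightarrow> 'a \<Rightarrow> 'a) \<Rightarrow> nat \<Rightarrow> nat \<Rightarrow> nat \<Rightarrow> 'a \<Rightarrow> 'a" where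
  "col th l 0 k = id"
| "col th l (Suc n) k = th (k mod l) \<circ> col th l n (k div l)"

definition subst_word :: "(nat \<Rightarrow> 'a \<Rightarrow> 'a) \<Rightarrow> nat \<Rightarrow> nat \<Rightarrow> 'a \<Rightarrow> 'a list" where
  "subst_word th l n a = map (\<lambda>k. col th l n k a) [0..<l ^ n]"

definition primitive :: "(nat \<Rightarrow> 'a \<Rightarrow> 'a) \<Rightarrow> nat \<Rightarrow> bool" where
  "primitive th l \<longleftrightarrow> (\<exists>n\<ge>1. \<forall>a b. b \<in> set (subst_word th l n a))"

definition subst_lang :: "(nat \<Rightarrow> 'a \<Rightarrow> 'a) \<Rightarrow> nat \<Rightarrow> 'a list set" where
  "subst_lang th l = {w. \<exists>n a u v. subst_word th l n a = u @ w @ v}"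

definition subst_shift :: "(nat \<Rightarrow> 'a \<Rightarrow> 'a) \<Rightarrow> nat \<Rightarrow> (int \<Rightarrow> 'a) set" where
  "subst_shift th l = {x. \<forall>m (k::nat). map (\<lambda>i. x (m + int i)) [0..<k] \<in> subst_lang th l}"

definition aperiodic :: "(nat \<Rightarrow> 'a \<Rightarrow> 'a) \<Rightarrow> nat \<Rightarrow> bool" where
  "aperiodic th l \<longleftrightarrow> (\<forall>x\<in>subst_shift th l. \<not> (\<exists>p>0. \<forall>m. x (m + int p) = x m))"

text \<open>Action of th^n on two-sided sequences (position 0 is the start of th^n(x 0)).\<close>
definition subst_seq :: "(nat \<Rightarrow> 'a \<Rightarrow> 'a) \<Rightarrow> nat \<Rightarrow> nat \<Rightarrow> (int \<Rightarrow> 'a) \<Rightarrow> int \<Rightarrow> 'a" where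
  "subst_seq th l n x m = col th l n (nat (m mod int (l ^ n))) (x (m div int (l ^ n)))"

definition column_rank :: "(nat \<Rightarrow> 'a \<Rightarrow> 'a) \<Rightarrow> nat \<Rightarrow> nat" where
  "column_rank th l = (LEAST r. \<exists>n\<ge>1. \<exists>i<l ^ n. card (range (col th l n i)) = r)"

definition quasi_bijective :: "(nat \<Rightarrow> 'a \<Rightarrow> 'a) \<Rightarrow> nat \<Rightarrow> bool" where
  "quasi_bijective th l \<longleftrightarrow>
     (\<exists>n\<ge>1. \<forall>i<l ^ n. card (range (col th l n i)) = column_rank th l)"

definition periodic_point :: "(nat \<Rightarrow> 'a \<Rightarrow> 'a) \<Rightarrow> nat \<Rightarrow> (int \<Rightarrow> 'a) \<Rightarrow> bool" where
  "periodic_point th l x \<longleftrightarrow> x \<in> subst_shift th l \<and> (\<exists>p\<ge>1. subst_seq th l p x = x)"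

definition fixed_point :: "(nat \<Rightarrow> 'a \<Rightarrow> 'a) \<Rightarrow> nat \<Rightarrow> (int \<Rightarrow> 'a) \<Rightarrow> bool" where
  "fixed_point th l x \<longleftrightarrow> x \<in> subst_shift th l \<and> subst_seq th l 1 x = x"

definition simplified_form :: "(nat \<Rightarrow> 'a \<Rightarrow> 'a) \<Rightarrow> nat \<Rightarrow> bool" where
  "simplified_form th l \<longleftrightarrow>
     (\<forall>i<l. card (range (th i)) = column_rank th l) \<and>
     (\<forall>x. periodic_point th l x \<longrightarrow> fixed_point th l x)"

inductive_set semigrp :: "(nat \<Rightarrow> 'a \<Rightarrow> 'a) \<Rightarrow> nat \<Rightarrow> ('a \<Rightarrow> 'a) set"
  for th l where
  gen: "n \<ge> 1 \<Longrightarrow> i < l ^ n \<Longrightarrow> col th l n i \<in> semigrp th l"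
| comp: "f \<in> semigrp th l \<Longrightarrow> g \<in> semigrp th l \<Longrightarrow> f \<circ> g \<in> semigrp th l"

definition e_plus :: "(nat \<Rightarrow> 'a \<Rightarrow> 'a) \<Rightarrow> nat \<Rightarrow> 'a \<Rightarrow> 'a" where
  "e_plus th l = th 0"

definition e_minus :: "(nat \<Rightarrow> 'a \<Rightarrow> 'a) \<Rightarrow> nat \<Rightarrow> 'a \<Rightarrow> 'a" where
  "e_minus th l = th (l - 1)"

text \<open>Green's R- and L-classes in S (with S^1 = S plus identity).\<close>
definition R_class :: "('a \<Rightarrow> 'a) set \<Rightarrow> ('a \<Rightarrow> 'a) \<Rightarrow> ('a \<Rightarrow> 'a) set" where
  "R_class S x = {y \<in> S. (\<lambda>u. y \<circ> u) ` (insert id S) = (\<lambda>u. x \<circ> u) ` (insert id S)}"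

definition L_class :: "('a \<Rightarrow> 'a) set \<Rightarrow> ('a \<Rightarrow> 'a) \<Rightarrow> ('a \<Rightarrow> 'a) set" where
  "L_class S x = {y \<in> S. (\<lambda>u. u \<circ> y) ` (insert id S) = (\<lambda>u. u \<circ> x) ` (insert id S)}"

definition H_plus :: "(nat \<Rightarrow> 'a \<Rightarrow> 'a) \<Rightarrow> nat \<Rightarrow> ('a \<Rightarrow> 'a) set" where
  "H_plus th l = (\<lambda>s. e_plus th l \<circ> s \<circ> e_plus th l) ` semigrp th l"

definition H_minus :: "(nat \<Rightarrow> 'a \<Rightarrow> 'a) \<Rightarrow> nat \<Rightarrow> ('a \<Rightarrow> 'a) set" where
  "H_minus th l = (\<lambda>s. e_minus th l \<circ> s \<circ> e_minus th l) ` semigrp th l"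

definition H_plus_minus :: "(nat \<Rightarrow> 'a \<Rightarrow> 'a) \<Rightarrow> nat \<Rightarrow> ('a \<Rightarrow> 'a) set" where
  "H_plus_minus th l = R_class (semigrp th l) (e_plus th l) \<inter> L_class (semigrp th l) (e_minus th l)"

definition H_minus_plus :: "(nat \<Rightarrow> 'a \<Rightarrow> 'a) \<Rightarrow> nat \<Rightarrow> ('a \<Rightarrow> 'a) set" where
  "H_minus_plus th l = R_class (semigrp th l) (e_minus th l) \<inter> L_class (semigrp th l) (e_plus th l)"

definition consecutive :: "(nat \<Rightarrow> 'a \<Rightarrow> 'a) \<Rightarrow> nat \<Rightarrow> ('a \<Rightarrow> 'a) \<Rightarrow> ('a \<Rightarrow> 'a) \<Rightarrow> bool" where
  "consecutive th l L R \<longleftrightarrow>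
     (\<exists>n>0. \<exists>i. 0 < i \<and> i < l ^ n \<and> L = col th l n (i - 1) \<and> R = col th l n i)"

definition S2 :: "(nat \<Rightarrow> 'a \<Rightarrow> 'a) \<Rightarrow> nat \<Rightarrow> (('a \<Rightarrow> 'a) \<times> ('a \<Rightarrow> 'a)) set" where
  "S2 th l = {(L, R). consecutive th l L R \<and> L \<in> H_minus_plus th l \<and> R \<in> H_plus th l}"

definition S2_minus :: "(nat \<Rightarrow> 'a \<Rightarrow> 'a) \<Rightarrow> nat \<Rightarrow> (('a \<Rightarrow> 'a) \<times> ('a \<Rightarrow> 'a)) set" where
  "S2_minus th l = {(L, R). consecutive th l L R \<and> L \<in> H_minus th l \<and> R \<in> H_plus_minus th l}"

end

theory Submission
  imports Defs
begin

text \<open>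
  All column maps of a substitution in simplified form have the column rank c, and every element of
  S_theta is itself a column map of some power, so S_theta is a semigroup of maps of constant rank c.
  In such a semigroup composition keeps the range of the left factor and the kernel of the right
  factor; hence R-classes are classes of equal range, L-classes classes of equal kernel, and e S e
  consists of the maps with the range and the kernel of e.  So S2 and S2_minus are the consecutive
  pairs (L, R) with range L = range e_-, range R = range e_+ and common kernel that of e_+ resp. e_-,
  and right multiplication by a column map psi only replaces this kernel by the kernel of psi.
  Right multiplication by phi in H_{+-} is injective on S2 because range phi = range e_+ is a
  transversal of the kernel of e_+, and it is inverted by psi = e_+ (phi e_+)^k, where
  (phi e_+)^(k+1) is the identity on range phi.
\<close>

definition same_kernel :: "('a \<Rightarrow> 'b) \<Rightarrow> ('a \<Rightarrow> 'c) \<Rightarrow> bool" where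
  "same_kernel f g \<longleftrightarrow> (\<forall>a b. f a = f b \<longleftrightarrow> g a = g b)"

lemma same_kernel_refl [simp]: "same_kernel f f"
  by (simp add: same_kernel_def)

lemma same_kernel_sym: "same_kernel f g \<Longrightarrow> same_kernel g f"
  by (simp add: same_kernel_def)

lemma same_kernel_trans: "same_kernel f g \<Longrightarrow> same_kernel g h \<Longrightarrow> same_kernel f h"
  by (simp add: same_kernel_def)

definition range_kernel_class ::
    "('a \<Rightarrow> 'b) set \<Rightarrow> ('a \<Rightarrow> 'b) \<Rightarrow> ('a \<Rightarrow> 'b) \<Rightarrow> ('a \<Rightarrow> 'b) set" where
  "range_kernel_class S f g = {y \<in> S. range y = range f \<and> same_kernel y g}"

locale constant_rank_semigroup =
  fixes S :: "('a::finite \<Rightarrow> 'a) set" and c :: nat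
  assumes comp_closed: "f \<in> S \<Longrightarrow> g \<in> S \<Longrightarrow> f \<circ> g \<in> S"
    and card_range: "f \<in> S \<Longrightarrow> card (range f) = c"
begin

lemma range_comp: assumes "f \<in> S" "g \<in> S" shows "range (f \<circ> g) = range f"
proof -
  have "range (f \<circ> g) \<subseteq> range f" by auto
  moreover have "card (range (f \<circ> g)) = card (range f)"
    using assms by (metis card_range comp_closed)
  ultimately show ?thesis by (metis card_subset_eq finite)
qed

lemma same_kernel_comp: assumes "f \<in> S" "g \<in> S" shows "same_kernel (f \<circ> g) g"
proof -
  have "card (f ` range g) = card (range g)"
    using assms by (metis card_range comp_closed image_comp)
  hence "inj_on f (range g)" by (simp add: eq_card_imp_inj_on)
  thus ?thesis unfolding same_kernel_def by (auto dest: inj_onD)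
qed

lemma funpow_comp_mem: "x \<in> S \<Longrightarrow> y \<in> S \<Longrightarrow> x ^^ k \<circ> y \<in> S"
  by (induction k) (auto simp: o_assoc[symmetric] intro: comp_closed)

lemma comp_funpow_mem: "x \<in> S \<Longrightarrow> y \<in> S \<Longrightarrow> y \<circ> x ^^ k \<in> S"
proof (induction k)
  case (Suc k)
  have "y \<circ> x ^^ Suc k = (y \<circ> x ^^ k) \<circ> x"
    by (simp add: funpow_Suc_right comp_assoc del: funpow.simps)
  thus ?case using Suc comp_closed by metis
qed simp

lemma funpow_Suc_mem: "x \<in> S \<Longrightarrow> x ^^ Suc k \<in> S"
  using funpow_comp_mem[of x x k] by (simp add: funpow_Suc_right del: funpow.simps)

lemma range_funpow_Suc: assumes "x \<in> S" shows "range (x ^^ Suc k) = range x"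
proof (induction k)
  case (Suc k)
  have "x ^^ Suc (Suc k) = x ^^ Suc k \<circ> x" by (rule funpow_Suc_right)
  thus ?case using Suc range_comp[OF funpow_Suc_mem assms] assms by simp
qed simp

text \<open>All positive powers of x have the range of x, so a repetition x^i = x^j among the finitely
  many powers makes x^(j-i) the identity on range x.\<close>
lemma funpow_fixes_range:
  assumes x: "x \<in> S" obtains k where "\<forall>a\<in>range x. (x ^^ Suc k) a = a"
proof -
  have "\<not> inj (\<lambda>n::nat. x ^^ n)"
    using finite_UNIV infinite_UNIV_nat finite_imageD finite_subset subset_UNIV by metis
  then obtain i j where ij: "i < j" "x ^^ i = x ^^ j"
    unfolding inj_def by (metis linorder_neqE_nat)
  have "\<forall>a\<in>range x. (x ^^ Suc (j - i - 1)) a = a"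
  proof
    fix a assume "a \<in> range x"
    then obtain b where b: "a = (x ^^ i) (x b)"
      using range_funpow_Suc[OF x, of i] by (metis comp_apply funpow_Suc_right rangeE)
    have "x ^^ Suc (j - i - 1) \<circ> x ^^ i = x ^^ j"
      using funpow_add[of "Suc (j - i - 1)" i x] ij(1) by simp
    hence "(x ^^ Suc (j - i - 1)) a = (x ^^ j) (x b)"
      using b by (metis comp_apply)
    also have "\<dots> = a" using ij b by simp
    finally show "(x ^^ Suc (j - i - 1)) a = a" .
  qed
  thus thesis by (rule that)
qed

lemma funpow_comp_same_range:
  assumes "\<forall>a\<in>range x. (x ^^ k) a = a" "range y = range x" shows "x ^^ k \<circ> y = y"
proof
  fix a
  have "y a \<in> range x" using assms(2) by (metis rangeI)
  thus "(x ^^ k \<circ> y) a = y a" using assms(1) by (simp only: comp_apply)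
qed

lemma comp_funpow_same_kernel:
  assumes "\<forall>a\<in>range x. (x ^^ k) a = a" "same_kernel y x" shows "y \<circ> x ^^ k = y"
proof
  fix a
  have "x ((x ^^ k) a) = x a" using assms(1) by (simp add: funpow_swap1)
  thus "(y \<circ> x ^^ k) a = y a" using assms(2) unfolding same_kernel_def by simp
qed

lemma same_range_imp_right_multiple:
  assumes x: "x \<in> S" and y: "y \<in> S" and "range y = range x" shows "\<exists>u\<in>S. y = x \<circ> u"
proof -
  obtain k where "\<forall>a\<in>range x. (x ^^ Suc k) a = a" using funpow_fixes_range[OF x] .
  hence "y = x \<circ> (x ^^ k \<circ> y)"
    using funpow_comp_same_range assms(3) by (metis fun.map_comp funpow.simps(2))
  thus ?thesis using funpow_comp_mem[OF x y] by blast
qed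

lemma same_kernel_imp_left_multiple:
  assumes x: "x \<in> S" and y: "y \<in> S" and "same_kernel y x" shows "\<exists>u\<in>S. y = u \<circ> x"
proof -
  obtain k where "\<forall>a\<in>range x. (x ^^ Suc k) a = a" using funpow_fixes_range[OF x] .
  hence "y = (y \<circ> x ^^ k) \<circ> x"
    using comp_funpow_same_kernel assms(3)
    by (metis comp_assoc funpow_Suc_right)
  thus ?thesis using comp_funpow_mem[OF x y] by blast
qed

lemma right_ideal_comp_subset:
  assumes u: "u \<in> S"
  shows "(\<lambda>w. (x \<circ> u) \<circ> w) ` insert id S \<subseteq> (\<lambda>w. x \<circ> w) ` insert id S"
proof
  fix z assume "z \<in> (\<lambda>w. (x \<circ> u) \<circ> w) ` insert id S"
  then obtain w where w: "w \<in> insert id S" "z = x \<circ> (u \<circ> w)" by (metis comp_assoc imageE)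
  have "u \<circ> w \<in> S" using w(1) u comp_closed by auto
  thus "z \<in> (\<lambda>w. x \<circ> w) ` insert id S" using w(2) by blast
qed

lemma left_ideal_comp_subset:
  assumes u: "u \<in> S"
  shows "(\<lambda>w. w \<circ> (u \<circ> x)) ` insert id S \<subseteq> (\<lambda>w. w \<circ> x) ` insert id S"
proof
  fix z assume "z \<in> (\<lambda>w. w \<circ> (u \<circ> x)) ` insert id S"
  then obtain w where w: "w \<in> insert id S" "z = (w \<circ> u) \<circ> x" by (metis comp_assoc imageE)
  have "w \<circ> u \<in> S" using w(1) u comp_closed by auto
  thus "z \<in> (\<lambda>w. w \<circ> x) ` insert id S" using w(2) by blast
qed

lemma R_class_eq: assumes x: "x \<in> S" shows "R_class S x = {y \<in> S. range y = range x}"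
proof (intro set_eqI iffI)
  fix y assume "y \<in> R_class S x"
  hence y: "y \<in> S" and "y \<circ> id \<in> (\<lambda>u. x \<circ> u) ` insert id S"
    unfolding R_class_def by blast+
  then obtain u where "u \<in> insert id S" "y = x \<circ> u" by (metis comp_id imageE)
  thus "y \<in> {y \<in> S. range y = range x}" using y range_comp[OF x] by auto
next
  fix y assume "y \<in> {y \<in> S. range y = range x}"
  hence y: "y \<in> S" and r: "range y = range x" by auto
  obtain u where u: "u \<in> S" "y = x \<circ> u" using same_range_imp_right_multiple[OF x y r] by blast
  obtain v where v: "v \<in> S" "x = y \<circ> v"
    using same_range_imp_right_multiple[OF y x r[symmetric]] by blast
  have "(\<lambda>w. y \<circ> w) ` insert id S \<subseteq> (\<lambda>w. x \<circ> w) ` insert id S"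
    unfolding u(2) by (rule right_ideal_comp_subset[OF u(1)])
  moreover have "(\<lambda>w. x \<circ> w) ` insert id S \<subseteq> (\<lambda>w. y \<circ> w) ` insert id S"
    unfolding v(2) by (rule right_ideal_comp_subset[OF v(1)])
  ultimately show "y \<in> R_class S x" unfolding R_class_def using y by blast
qed

lemma L_class_eq: assumes x: "x \<in> S" shows "L_class S x = {y \<in> S. same_kernel y x}"
proof (intro set_eqI iffI)
  fix y assume "y \<in> L_class S x"
  hence y: "y \<in> S" and "id \<circ> y \<in> (\<lambda>u. u \<circ> x) ` insert id S"
    unfolding L_class_def by blast+
  then obtain u where "u \<in> insert id S" "y = u \<circ> x" by (metis id_comp imageE)
  thus "y \<in> {y \<in> S. same_kernel y x}" using y same_kernel_comp[OF _ x] by auto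
next
  fix y assume "y \<in> {y \<in> S. same_kernel y x}"
  hence y: "y \<in> S" and k: "same_kernel y x" by auto
  obtain u where u: "u \<in> S" "y = u \<circ> x" using same_kernel_imp_left_multiple[OF x y k] by blast
  obtain v where v: "v \<in> S" "x = v \<circ> y"
    using same_kernel_imp_left_multiple[OF y x same_kernel_sym[OF k]] by blast
  have "(\<lambda>w. w \<circ> y) ` insert id S \<subseteq> (\<lambda>w. w \<circ> x) ` insert id S"
    unfolding u(2) by (rule left_ideal_comp_subset[OF u(1)])
  moreover have "(\<lambda>w. w \<circ> x) ` insert id S \<subseteq> (\<lambda>w. w \<circ> y) ` insert id S"
    unfolding v(2) by (rule left_ideal_comp_subset[OF v(1)])
  ultimately show "y \<in> L_class S x" unfolding L_class_def using y by blast
qed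

lemma R_class_Int_L_class:
  "f \<in> S \<Longrightarrow> g \<in> S \<Longrightarrow> R_class S f \<inter> L_class S g = range_kernel_class S f g"
  by (auto simp: R_class_eq L_class_eq range_kernel_class_def)

lemma sandwich_eq: assumes e: "e \<in> S"
  shows "(\<lambda>s. e \<circ> s \<circ> e) ` S = range_kernel_class S e e"
proof (intro set_eqI iffI)
  fix y assume "y \<in> (\<lambda>s. e \<circ> s \<circ> e) ` S"
  then obtain s where s: "s \<in> S" "y = e \<circ> (s \<circ> e)" "y = (e \<circ> s) \<circ> e"
    by (auto simp: o_assoc)
  have se: "s \<circ> e \<in> S" and es: "e \<circ> s \<in> S" using s(1) e comp_closed by blast+
  have "y \<in> S" by (simp only: s(2) comp_closed[OF e se])
  moreover have "range y = range e" by (simp only: s(2) range_comp[OF e se])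
  moreover have "same_kernel y e" by (simp only: s(3) same_kernel_comp[OF es e])
  ultimately show "y \<in> range_kernel_class S e e" unfolding range_kernel_class_def by blast
next
  fix y assume "y \<in> range_kernel_class S e e"
  hence y: "y \<in> S" and r: "range y = range e" and k: "same_kernel y e"
    unfolding range_kernel_class_def by auto
  obtain k where periodic: "\<forall>a\<in>range e. (e ^^ Suc k) a = a" using funpow_fixes_range[OF e] .
  have "y = e ^^ Suc k \<circ> y \<circ> e ^^ Suc k"
    using funpow_comp_same_range[OF periodic r] comp_funpow_same_kernel[OF periodic k] by simp
  also have "\<dots> = e \<circ> (e ^^ k \<circ> y \<circ> e ^^ k) \<circ> e"
    by (simp add: o_assoc funpow_swap1 del: funpow.simps) (simp add: comp_assoc funpow_swap1 fun_eq_iff)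
  finally show "y \<in> (\<lambda>s. e \<circ> s \<circ> e) ` S"
    using comp_funpow_mem[OF e funpow_comp_mem[OF e y]] by blast
qed

lemma range_kernel_class_comp:
  assumes y: "y \<in> range_kernel_class S f g" and \<psi>: "\<psi> \<in> S" and k: "same_kernel \<psi> h"
  shows "y \<circ> \<psi> \<in> range_kernel_class S f h"
proof -
  have "y \<in> S" "range y = range f" using y by (simp_all add: range_kernel_class_def)
  moreover have "same_kernel (y \<circ> \<psi>) h"
    using same_kernel_trans[OF same_kernel_comp[OF \<open>y \<in> S\<close> \<psi>] k] .
  ultimately show ?thesis
    unfolding range_kernel_class_def using \<psi> comp_closed range_comp by auto
qed

text \<open>The range of e meets every class of the kernel of e, so it is a transversal of that kernel.\<close>
lemma comp_right_cancel:
  assumes e: "e \<in> S" and "same_kernel f e" "same_kernel f' e" "range h = range e"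
    and eq: "f \<circ> h = f' \<circ> h"
  shows "f = f'"
proof
  fix a
  have "e a \<in> range (e \<circ> e)" using range_comp[OF e e] by simp
  then obtain c where "e (e c) = e a" by (metis comp_apply rangeE)
  moreover obtain b where "h b = e c" using assms(4) by (metis rangeE rangeI)
  ultimately have "e (h b) = e a" by simp
  moreover have "f (h b) = f' (h b)" using eq by (metis comp_apply)
  ultimately show "f a = f' a" using assms(2,3) unfolding same_kernel_def by metis
qed

lemma right_inverse_on_range:
  assumes x: "x \<in> S" and e: "e \<in> S" and r: "range x = range e"
  obtains \<psi> where "\<psi> \<in> S" "same_kernel \<psi> e" "\<forall>a\<in>range x. x (\<psi> a) = a"
proof -
  define g where "g = x \<circ> e"
  have g: "g \<in> S" "range g = range x"
    unfolding g_def using comp_closed range_comp x e by blast+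
  obtain k where periodic: "\<forall>a\<in>range g. (g ^^ Suc k) a = a" using funpow_fixes_range[OF g(1)] .
  have "e \<circ> g ^^ k \<in> S" using comp_funpow_mem[OF g(1) e] .
  moreover have "same_kernel (e \<circ> g ^^ k) e"
  proof (cases k)
    case (Suc j)
    have "e \<circ> g ^^ k = (e \<circ> g ^^ j \<circ> x) \<circ> e"
      unfolding Suc g_def by (simp add: funpow_Suc_right o_assoc del: funpow.simps)
    thus ?thesis
      using same_kernel_comp[OF comp_closed[OF comp_funpow_mem[OF g(1) e] x] e] by simp
  qed simp
  moreover have "\<forall>a\<in>range x. x ((e \<circ> g ^^ k) a) = a"
  proof
    fix a assume "a \<in> range x"
    hence "(g ^^ Suc k) a = a" using periodic g(2) by blast
    thus "x ((e \<circ> g ^^ k) a) = a" by (simp add: g_def)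
  qed
  ultimately show thesis by (rule that)
qed

end

lemma primitive_length_pos:
  assumes "primitive th l" shows "0 < l"
proof (rule ccontr)
  obtain n where "n \<ge> 1" "\<forall>a b. b \<in> set (subst_word th l n a)"
    using assms unfolding primitive_def by blast
  moreover assume "\<not> 0 < l"
  ultimately show False by (simp add: subst_word_def)
qed

lemma col_comp:
  assumes l: "0 < l"
  shows "i < l ^ n \<Longrightarrow> col th l n i \<circ> col th l m j = col th l (n + m) (i + l ^ n * j)"
proof (induction n arbitrary: i)
  case (Suc n)
  have "(i + l ^ Suc n * j) mod l = i mod l" by (simp add: mult.assoc)
  moreover have "(i + l ^ Suc n * j) div l = i div l + l ^ n * j" using l by (simp add: mult.assoc)
  moreover have "i div l < l ^ n"
    using Suc.prems l by (simp add: less_mult_imp_div_less mult.commute)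
  ultimately show ?case using Suc.IH by (simp add: fun_eq_iff)
qed simp

lemma col_index_bound:
  assumes "i < (l::nat) ^ n" "j < l ^ m" shows "i + l ^ n * j < l ^ (n + m)"
proof -
  have "i + l ^ n * j < l ^ n * (j + 1)" using assms(1) by simp
  also have "\<dots> \<le> l ^ n * l ^ m" using assms(2) by (intro mult_le_mono2) simp
  finally show ?thesis by (simp add: power_add)
qed

lemma semigrp_col:
  assumes "0 < l" and "f \<in> semigrp th l"
  obtains m j where "1 \<le> m" "j < l ^ m" "f = col th l m j"
  using assms(2)
proof (induction arbitrary: thesis rule: semigrp.induct)
  case (comp f g)
  obtain m j where "1 \<le> m" "j < l ^ m" "f = col th l m j" using comp.IH(1) by blast
  moreover obtain m' j' where "j' < l ^ m'" "g = col th l m' j'" using comp.IH(2) by blast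
  ultimately show ?case
    using comp.prems col_comp[OF assms(1)] col_index_bound by (metis le_add1 order_trans)
qed blast

lemma card_range_col:
  fixes th :: "nat \<Rightarrow> 'a::finite \<Rightarrow> 'a"
  assumes sf: "simplified_form th l" and l: "0 < l" and m: "1 \<le> m" "j < l ^ m"
  shows "card (range (col th l m j)) = column_rank th l"
proof (rule antisym)
  obtain m' where "m = Suc m'" using m(1) by (cases m) auto
  hence "range (col th l m j) \<subseteq> range (th (j mod l))" by auto
  hence "card (range (col th l m j)) \<le> card (range (th (j mod l)))" by (rule card_mono[OF finite])
  also have "\<dots> = column_rank th l" using sf l unfolding simplified_form_def by simp
  finally show "card (range (col th l m j)) \<le> column_rank th l" .
  show "column_rank th l \<le> card (range (col th l m j))"
    unfolding column_rank_def by (rule Least_le) (use m in blast)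
qed

text \<open>Every element of the semigroup is itself a column map, which turns the pair
  (L \<circ> \<psi>, R \<circ> \<psi>) into a pair of adjacent columns of a higher power.\<close>
lemma consecutive_comp:
  assumes l: "0 < l" and "consecutive th l L R" and "\<psi> \<in> semigrp th l"
  shows "consecutive th l (L \<circ> \<psi>) (R \<circ> \<psi>)"
proof -
  obtain n i where ni: "n > 0" "0 < i" "i < l ^ n"
    and LR: "L = col th l n (i - 1)" "R = col th l n i"
    using assms(2) unfolding consecutive_def by blast
  obtain m j where mj: "j < l ^ m" "\<psi> = col th l m j" using semigrp_col[OF l assms(3)] .
  have "L \<circ> \<psi> = col th l (n + m) (i + l ^ n * j - 1)"
    using ni LR mj col_comp[OF l, of "i - 1" n th m j] by simp
  moreover have "R \<circ> \<psi> = col th l (n + m) (i + l ^ n * j)"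
    using ni LR mj col_comp[OF l, of i n th m j] by simp
  moreover have "i + l ^ n * j < l ^ (n + m)" using col_index_bound ni(3) mj(1) by blast
  ultimately show ?thesis unfolding consecutive_def using ni(1,2) by (metis add_gr_0)
qed

locale simplified_substitution =
  fixes th :: "nat \<Rightarrow> 'a::finite \<Rightarrow> 'a" and l :: nat
  assumes simplified: "simplified_form th l" and length_pos: "0 < l"
begin

sublocale constant_rank_semigroup "semigrp th l" "column_rank th l"
proof
  fix f assume "f \<in> semigrp th l"
  then obtain m j where "1 \<le> m" "j < l ^ m" "f = col th l m j"
    using semigrp_col length_pos by blast
  thus "card (range f) = column_rank th l" using card_range_col simplified length_pos by blast
qed (rule semigrp.comp)

lemma e_plus_mem: "e_plus th l \<in> semigrp th l"
  using semigrp.gen[of 1 0 l th] length_pos by (simp add: e_plus_def)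

lemma e_minus_mem: "e_minus th l \<in> semigrp th l"
  using semigrp.gen[of 1 "l - 1" l th] length_pos by (simp add: e_minus_def)

lemma H_plus_eq:
  "H_plus th l = range_kernel_class (semigrp th l) (e_plus th l) (e_plus th l)"
  unfolding H_plus_def using sandwich_eq[OF e_plus_mem] .

lemma H_minus_eq:
  "H_minus th l = range_kernel_class (semigrp th l) (e_minus th l) (e_minus th l)"
  unfolding H_minus_def using sandwich_eq[OF e_minus_mem] .

lemma H_minus_plus_eq:
  "H_minus_plus th l = range_kernel_class (semigrp th l) (e_minus th l) (e_plus th l)"
  unfolding H_minus_plus_def using R_class_Int_L_class e_minus_mem e_plus_mem .

lemma H_plus_minus_eq:
  "H_plus_minus th l = range_kernel_class (semigrp th l) (e_plus th l) (e_minus th l)"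
  unfolding H_plus_minus_def using R_class_Int_L_class e_plus_mem e_minus_mem .

definition consecutive_pairs :: "('a \<Rightarrow> 'a) \<Rightarrow> (('a \<Rightarrow> 'a) \<times> ('a \<Rightarrow> 'a)) set" where
  "consecutive_pairs k = {(L, R). consecutive th l L R
      \<and> L \<in> range_kernel_class (semigrp th l) (e_minus th l) k
      \<and> R \<in> range_kernel_class (semigrp th l) (e_plus th l) k}"

lemma S2_eq: "S2 th l = consecutive_pairs (e_plus th l)"
  unfolding S2_def consecutive_pairs_def H_minus_plus_eq H_plus_eq ..

lemma S2_minus_eq: "S2_minus th l = consecutive_pairs (e_minus th l)"
  unfolding S2_minus_def consecutive_pairs_def H_minus_eq H_plus_minus_eq ..

lemma consecutive_pairs_comp:
  assumes "(L, R) \<in> consecutive_pairs k" "\<psi> \<in> semigrp th l" "same_kernel \<psi> k'"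
  shows "(L \<circ> \<psi>, R \<circ> \<psi>) \<in> consecutive_pairs k'"
  using assms consecutive_comp[OF length_pos] range_kernel_class_comp
  unfolding consecutive_pairs_def by blast

lemma same_kernel_consecutive_pairs:
  "(L, R) \<in> consecutive_pairs k \<Longrightarrow> same_kernel L k \<and> same_kernel R k"
  unfolding consecutive_pairs_def range_kernel_class_def by auto

lemma inj_on_comp_consecutive_pairs:
  assumes k: "k \<in> semigrp th l" and "range \<phi> = range k"
  shows "inj_on (\<lambda>(L, R). (L \<circ> \<phi>, R \<circ> \<phi>)) (consecutive_pairs k)"
proof (rule inj_onI)
  fix p q assume pq: "p \<in> consecutive_pairs k" "q \<in> consecutive_pairs k"
    "(\<lambda>(L, R). (L \<circ> \<phi>, R \<circ> \<phi>)) p = (\<lambda>(L, R). (L \<circ> \<phi>, R \<circ> \<phi>)) q"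
  obtain L R L' R' where p: "p = (L, R)" and q: "q = (L', R')" by (cases p, cases q)
  have "L \<circ> \<phi> = L' \<circ> \<phi>" "R \<circ> \<phi> = R' \<circ> \<phi>" using pq(3) p q by simp_all
  thus "p = q"
    using comp_right_cancel[OF k _ _ assms(2)] same_kernel_consecutive_pairs pq(1,2) p q by metis
qed

lemma image_comp_consecutive_pairs:
  assumes k: "k \<in> semigrp th l" and \<phi>: "\<phi> \<in> semigrp th l"
    and "range \<phi> = range k" and "same_kernel \<phi> k'"
  shows "(\<lambda>(L, R). (L \<circ> \<phi>, R \<circ> \<phi>)) ` consecutive_pairs k = consecutive_pairs k'"
proof (intro subset_antisym subsetI)
  fix p assume "p \<in> (\<lambda>(L, R). (L \<circ> \<phi>, R \<circ> \<phi>)) ` consecutive_pairs k"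
  thus "p \<in> consecutive_pairs k'" using consecutive_pairs_comp[OF _ \<phi> assms(4)] by auto
next
  fix p assume p: "p \<in> consecutive_pairs k'"
  then obtain L R where LR: "p = (L, R)" "(L, R) \<in> consecutive_pairs k'" by (cases p) auto
  obtain \<psi> where \<psi>: "\<psi> \<in> semigrp th l" "same_kernel \<psi> k"
    and inverse: "\<forall>a\<in>range \<phi>. \<phi> (\<psi> a) = a"
    using right_inverse_on_range[OF \<phi> k assms(3)] .
  have "F \<circ> \<psi> \<circ> \<phi> = F" if "same_kernel F \<phi>" for F
    using that inverse unfolding same_kernel_def by (auto simp: fun_eq_iff)
  moreover have "same_kernel L \<phi>" "same_kernel R \<phi>"
    using same_kernel_consecutive_pairs[OF LR(2)] assms(4) same_kernel_trans same_kernel_sym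
    by blast+
  ultimately have "L \<circ> \<psi> \<circ> \<phi> = L" "R \<circ> \<psi> \<circ> \<phi> = R" by blast+
  hence "p = (\<lambda>(L, R). (L \<circ> \<phi>, R \<circ> \<phi>)) (L \<circ> \<psi>, R \<circ> \<psi>)"
    using LR(1) by simp
  moreover have "(L \<circ> \<psi>, R \<circ> \<psi>) \<in> consecutive_pairs k"
    using consecutive_pairs_comp[OF LR(2) \<psi>(1,2)] .
  ultimately show "p \<in> (\<lambda>(L, R). (L \<circ> \<phi>, R \<circ> \<phi>)) ` consecutive_pairs k" by blast
qed

lemma bij_betw_consecutive_pairs:
  assumes "k \<in> semigrp th l" "\<phi> \<in> semigrp th l" "range \<phi> = range k" "same_kernel \<phi> k'"
  shows "bij_betw (\<lambda>(L, R). (L \<circ> \<phi>, R \<circ> \<phi>)) (consecutive_pairs k) (consecutive_pairs k')"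
  using inj_on_comp_consecutive_pairs[OF assms(1,3)] image_comp_consecutive_pairs[OF assms]
  by (rule bij_betw_imageI)

end

theorem mainTheorem19:
  fixes th :: "nat \<Rightarrow> 'a::finite \<Rightarrow> 'a" and l :: nat
  assumes "primitive th l" and "aperiodic th l"
    and "quasi_bijective th l" and "simplified_form th l"
  shows "(\<forall>L R \<psi>. (L, R) \<in> S2 th l \<and> \<psi> \<in> H_minus_plus th l \<union> H_plus th l
             \<longrightarrow> (L \<circ> \<psi>, R \<circ> \<psi>) \<in> S2 th l) \<and>
         (\<forall>\<phi>\<in>H_plus_minus th l.
           bij_betw (\<lambda>(L, R). (L \<circ> \<phi>, R \<circ> \<phi>)) (S2 th l) (S2_minus th l))"
proof -
  interpret simplified_substitution th l
    using assms(4) primitive_length_pos[OF assms(1)] by unfold_locales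
  have "\<psi> \<in> semigrp th l \<and> same_kernel \<psi> (e_plus th l)"
    if "\<psi> \<in> H_minus_plus th l \<union> H_plus th l" for \<psi>
    using that unfolding H_minus_plus_eq H_plus_eq range_kernel_class_def by blast
  hence "(L \<circ> \<psi>, R \<circ> \<psi>) \<in> S2 th l"
    if "(L, R) \<in> S2 th l" "\<psi> \<in> H_minus_plus th l \<union> H_plus th l" for L R \<psi>
    using that consecutive_pairs_comp unfolding S2_eq by blast
  moreover have "bij_betw (\<lambda>(L, R). (L \<circ> \<phi>, R \<circ> \<phi>)) (S2 th l) (S2_minus th l)"
    if "\<phi> \<in> H_plus_minus th l" for \<phi>
    using that bij_betw_consecutive_pairs[OF e_plus_mem]
    unfolding S2_eq S2_minus_eq H_plus_minus_eq range_kernel_class_def by blast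
  ultimately show ?thesis by blast
qed

end
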